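(* Let $2<p<\infty$ and $T\in B(L^{p})$. Then for every $\epsilon>0$ there exists $\delta>0$ such that $\|Tf\|_2<\epsilon$ for every $f\in L^{p}$ with $\|f\|_p\le1$ and $\|f\|_2<\delta$.
   Context: $L^{p}=L^{p}([0,1],\mu)$, $\mu$ Lebesgue measure; $\|\cdot\|_s$ is the $L^s$ norm. *)

theory Defs
  imports "HOL-Analysis.Analysis"
begin

abbreviation unitI :: "real measure" where
  "unitI \<equiv> lebesgue_on {0..1}"

text \<open>Representatives of elements of L^p([0,1]) (real-valued).\<close>
definition Lp_space :: "real \<Rightarrow> (real \<Rightarrow> real) set" where
  "Lp_space p = {f. f \<in> borel_measurable unitI \<and> integrable unitI (\<lambda>x. \<bar>f x\<bar> powr p)}"

definition Lp_norm :: "real \<Rightarrow> (real \<Rightarrow> real) \<Rightarrow> real" where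
  "Lp_norm s f = (LINT x|unitI. \<bar>f x\<bar> powr s) powr (1 / s)"

definition bounded_Lp_operator :: "real \<Rightarrow> ((real \<Rightarrow> real) \<Rightarrow> (real \<Rightarrow> real)) \<Rightarrow> bool" where
  "bounded_Lp_operator p T \<longleftrightarrow>
     (\<forall>f\<in>Lp_space p. T f \<in> Lp_space p) \<and>
     (\<forall>f\<in>Lp_space p. \<forall>g\<in>Lp_space p. (AE x in unitI. f x = g x) \<longrightarrow> (AE x in unitI. T f x = T g x)) \<and>
     (\<forall>f\<in>Lp_space p. \<forall>g\<in>Lp_space p. \<forall>a b::real.
        AE x in unitI. T (\<lambda>y. a * f y + b * g y) x = a * T f x + b * T g x) \<and>
     (\<exists>C. \<forall>f\<in>Lp_space p. Lp_norm p (T f) \<le> C * Lp_norm p f)"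

end

theory Submission
  imports Defs
begin

text \<open>
  If the theorem failed for some \<open>\<epsilon>\<close>, there would be functions \<open>f\<close> with \<open>\<integral>|f|\<^sup>p \<le> 1\<close>, arbitrarily
  small \<open>\<integral>f\<^sup>2\<close> and \<open>\<integral>(Tf)\<^sup>2 \<ge> \<epsilon>\<^sup>2\<close>. Truncating such an \<open>f\<close> at a high level splits off a part
  that is small in \<open>L\<^sup>p\<close> (because \<open>f\<close> is small in \<open>L\<^sup>2\<close> and \<open>p > 2\<close>), which \<open>T\<close> maps to something
  small in \<open>L\<^sup>2\<close>; the rest \<open>h\<close> still has \<open>\<integral>(Th)\<^sup>2 \<ge> \<epsilon>\<^sup>2/8\<close> and lives on a set of arbitrarily
  small measure. Given \<open>G\<close>, deleting \<open>G\<close> on the support of \<open>h\<close> barely changes \<open>\<integral>(TG)\<^sup>2\<close>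
  (absolute continuity of \<open>\<integral>|G|\<^sup>p\<close>), and then adding \<open>\<plusminus>h\<close> with a suitable sign raises \<open>\<integral>(TG)\<^sup>2\<close>
  by about \<open>\<integral>(Th)\<^sup>2\<close> while raising \<open>\<integral>|G|\<^sup>p\<close> by at most 1. Iterating yields \<open>G\<^sub>n\<close> with
  \<open>\<integral>|G\<^sub>n|\<^sup>p \<le> n\<close> and \<open>\<integral>(TG\<^sub>n)\<^sup>2 \<ge> n\<epsilon>\<^sup>2/16\<close>, whereas boundedness of \<open>T\<close> on \<open>L\<^sup>p\<close> gives
  \<open>\<integral>(TG\<^sub>n)\<^sup>2 = O(n\<^bsup>2/p\<^esup>)\<close>, a contradiction since \<open>p > 2\<close>.
\<close>

abbreviation Lp_integral :: "real \<Rightarrow> (real \<Rightarrow> real) \<Rightarrow> real" where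
  "Lp_integral p f \<equiv> LINT x|unitI. \<bar>f x\<bar> powr p"

abbreviation sq_integral :: "(real \<Rightarrow> real) \<Rightarrow> real" where
  "sq_integral f \<equiv> LINT x|unitI. (f x)\<^sup>2"

lemma finite_measure_unitI: "finite_measure unitI"
  by (simp add: finite_measure_lebesgue_on)

lemma measure_unitI: "measure unitI {0..1} = 1"
  by (simp add: measure_restrict_space)

lemma Lp_spaceD:
  assumes "f \<in> Lp_space p"
  shows "f \<in> borel_measurable unitI" "integrable unitI (\<lambda>x. \<bar>f x\<bar> powr p)"
  using assms by (simp_all add: Lp_space_def)

lemma zero_in_Lp_space: "(\<lambda>x. 0) \<in> Lp_space p"
  by (simp add: Lp_space_def)

lemma Lp_norm_2: "Lp_norm 2 f = sqrt (sq_integral f)"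
  unfolding Lp_norm_def by (simp add: powr_half_sqrt)

lemma Lp_integral_le_1_of_Lp_norm:
  assumes "0 < p" "Lp_norm p f \<le> 1"
  shows "Lp_integral p f \<le> 1"
proof -
  have "Lp_integral p f = Lp_norm p f powr p"
    using assms(1) by (simp add: Lp_norm_def powr_powr)
  also have "\<dots> \<le> 1 powr p"
    using assms by (intro powr_mono2) (auto simp: Lp_norm_def)
  finally show ?thesis by simp
qed

lemma Lp_space_dominated:
  assumes "0 \<le> p" "f \<in> Lp_space p" "g \<in> borel_measurable unitI"
    and "\<And>x. x \<in> {0..1} \<Longrightarrow> \<bar>g x\<bar> \<le> \<bar>f x\<bar>"
  shows "g \<in> Lp_space p"
proof -
  have "integrable unitI (\<lambda>x. \<bar>g x\<bar> powr p)"
    by (rule Bochner_Integration.integrable_bound[OF Lp_spaceD(2)[OF assms(2)]])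
       (use assms in \<open>auto intro!: powr_mono2\<close>)
  then show ?thesis using assms(3) by (simp add: Lp_space_def)
qed

lemma Lp_space_If:
  assumes "0 \<le> p" "f \<in> Lp_space p" "Measurable.pred unitI P"
  shows "(\<lambda>x. if P x then f x else 0) \<in> Lp_space p"
  using Lp_spaceD(1)[OF assms(2)] assms(3)
  by (intro Lp_space_dominated[OF assms(1,2)]) auto

lemma abs_add_powr_le:
  fixes u v p :: real
  assumes "0 \<le> p"
  shows "\<bar>u + v\<bar> powr p \<le> 2 powr p * (\<bar>u\<bar> powr p + \<bar>v\<bar> powr p)"
proof -
  have "\<bar>u + v\<bar> powr p \<le> (2 * max \<bar>u\<bar> \<bar>v\<bar>) powr p"
    using assms by (intro powr_mono2) auto
  also have "\<dots> = 2 powr p * max \<bar>u\<bar> \<bar>v\<bar> powr p"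
    by (simp add: powr_mult)
  also have "max \<bar>u\<bar> \<bar>v\<bar> powr p \<le> \<bar>u\<bar> powr p + \<bar>v\<bar> powr p"
    by (simp add: max_def)
  finally show ?thesis by simp
qed

lemma Lp_space_lincomb:
  assumes "0 \<le> p" "f \<in> Lp_space p" "g \<in> Lp_space p"
  shows "(\<lambda>x. a * f x + b * g x) \<in> Lp_space p"
proof -
  note f = Lp_spaceD[OF assms(2)] and g = Lp_spaceD[OF assms(3)]
  have dominant: "integrable unitI
      (\<lambda>x. 2 powr p * (\<bar>a\<bar> powr p * \<bar>f x\<bar> powr p + \<bar>b\<bar> powr p * \<bar>g x\<bar> powr p))"
    using f(2) g(2) by auto
  have pointwise: "\<bar>a * f x + b * g x\<bar> powr p
      \<le> 2 powr p * (\<bar>a\<bar> powr p * \<bar>f x\<bar> powr p + \<bar>b\<bar> powr p * \<bar>g x\<bar> powr p)" for x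
    using abs_add_powr_le[OF assms(1), of "a * f x" "b * g x"] by (simp add: abs_mult powr_mult)
  have "integrable unitI (\<lambda>x. \<bar>a * f x + b * g x\<bar> powr p)"
    by (rule Bochner_Integration.integrable_bound[OF dominant]) (use f(1) g(1) pointwise in auto)
  moreover have "(\<lambda>x. a * f x + b * g x) \<in> borel_measurable unitI"
    using f(1) g(1) by measurable
  ultimately show ?thesis by (simp add: Lp_space_def)
qed

lemma square_le_powr_split:
  fixes v l p :: real
  assumes "2 \<le> p" "0 < l"
  shows "v\<^sup>2 \<le> 1 / l\<^sup>2 + l powr (p - 2) * \<bar>v\<bar> powr p"
proof (cases "l * \<bar>v\<bar> \<le> 1")
  case True
  then have "\<bar>v\<bar> \<le> 1 / l" using assms by (simp add: field_simps)
  then have "v\<^sup>2 \<le> (1 / l)\<^sup>2"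
    by (metis abs_ge_zero power2_abs power_mono)
  then show ?thesis by (simp add: power_one_over add_increasing2)
next
  case False
  then have "1 \<le> (l * \<bar>v\<bar>) powr (p - 2)"
    using assms by (simp add: ge_one_powr_ge_zero)
  then have "v\<^sup>2 \<le> (l * \<bar>v\<bar>) powr (p - 2) * \<bar>v\<bar> powr 2"
    by (simp add: mult_le_cancel_right1)
  also have "\<dots> = l powr (p - 2) * \<bar>v\<bar> powr p"
    using assms powr_add[of "\<bar>v\<bar>" "p - 2" 2] by (simp add: powr_mult)
  finally show ?thesis
    by (simp add: add_increasing)
qed

lemma integrable_square_Lp:
  assumes "2 \<le> p" "f \<in> Lp_space p"
  shows "integrable unitI (\<lambda>x. (f x)\<^sup>2)"
proof -
  have "integrable unitI (\<lambda>x. 1 + \<bar>f x\<bar> powr p)"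
    using Lp_spaceD(2)[OF assms(2)] by simp
  then show ?thesis
    by (rule Bochner_Integration.integrable_bound)
       (use Lp_spaceD(1)[OF assms(2)] square_le_powr_split[OF assms(1), of 1] in auto)
qed

lemma sq_integral_le_powr_split:
  assumes "2 \<le> p" "0 < l" "f \<in> Lp_space p"
  shows "sq_integral f \<le> 1 / l\<^sup>2 + l powr (p - 2) * Lp_integral p f"
proof -
  have "sq_integral f \<le> (LINT x|unitI. 1 / l\<^sup>2 + l powr (p - 2) * \<bar>f x\<bar> powr p)"
    using integrable_square_Lp[OF assms(1,3)] Lp_spaceD(2)[OF assms(3)]
      square_le_powr_split[OF assms(1,2)]
    by (intro integral_mono) auto
  also have "\<dots> = 1 / l\<^sup>2 + l powr (p - 2) * Lp_integral p f"
    using Lp_spaceD(2)[OF assms(3)] by (simp add: Bochner_Integration.integral_add measure_unitI)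
  finally show ?thesis .
qed

lemma sq_integral_le_Lp_integral:
  assumes "2 \<le> p" "f \<in> Lp_space p" "0 < N" "Lp_integral p f \<le> N"
  shows "sq_integral f \<le> 2 * N powr (2 / p)"
proof -
  define l where "l = N powr (- 1 / p)"
  have "0 < l" using assms(3) by (simp add: l_def)
  have l_sq: "1 / l\<^sup>2 = N powr (2 / p)"
    using assms(3) by (simp add: l_def powr_powr powr_minus_divide[symmetric] powr_numeral[symmetric])
  have "l powr (p - 2) * N = N powr (- 1 / p * (p - 2) + 1)"
    using assms(3) powr_add[of N "- 1 / p * (p - 2)" 1] by (simp add: l_def powr_powr)
  also have "- 1 / p * (p - 2) + 1 = 2 / p"
    using assms(1) by (simp add: field_simps)
  finally have l_pow: "l powr (p - 2) * N = N powr (2 / p)" .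
  have "sq_integral f \<le> 1 / l\<^sup>2 + l powr (p - 2) * Lp_integral p f"
    by (rule sq_integral_le_powr_split[OF assms(1) \<open>0 < l\<close> assms(2)])
  also have "\<dots> \<le> 1 / l\<^sup>2 + l powr (p - 2) * N"
    using assms(4) by (simp add: mult_left_mono)
  finally show ?thesis by (simp add: l_sq l_pow)
qed

lemma bounded_Lp_operator_Lp_space:
  assumes "bounded_Lp_operator p T" "f \<in> Lp_space p"
  shows "T f \<in> Lp_space p"
  using assms unfolding bounded_Lp_operator_def by blast

lemma bounded_Lp_operator_linear:
  assumes "bounded_Lp_operator p T" "f \<in> Lp_space p" "g \<in> Lp_space p"
  shows "AE x in unitI. T (\<lambda>y. a * f y + b * g y) x = a * T f x + b * T g x"
  using assms unfolding bounded_Lp_operator_def by blast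

lemma bounded_Lp_operator_Lp_integral_le:
  assumes "0 < p" "bounded_Lp_operator p T"
  obtains C where "0 \<le> C" "\<And>f. f \<in> Lp_space p \<Longrightarrow> Lp_integral p (T f) \<le> C * Lp_integral p f"
proof -
  obtain C0 where C0: "\<And>f. f \<in> Lp_space p \<Longrightarrow> Lp_norm p (T f) \<le> C0 * Lp_norm p f"
    using assms(2) unfolding bounded_Lp_operator_def by blast
  define D where "D = max C0 0"
  have "Lp_integral p (T f) \<le> D powr p * Lp_integral p f" if "f \<in> Lp_space p" for f
  proof -
    have "Lp_integral p (T f) = Lp_norm p (T f) powr p"
      using assms(1) by (simp add: Lp_norm_def powr_powr)
    also have "\<dots> \<le> (D * Lp_norm p f) powr p"
    proof (rule powr_mono2)
      have "C0 * Lp_norm p f \<le> D * Lp_norm p f"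
        by (simp add: D_def Lp_norm_def mult_right_mono)
      then show "Lp_norm p (T f) \<le> D * Lp_norm p f"
        using C0[OF that] by linarith
    qed (use assms(1) in \<open>auto simp: Lp_norm_def\<close>)
    also have "\<dots> = D powr p * Lp_integral p f"
      using assms(1) by (simp add: D_def Lp_norm_def powr_mult powr_powr)
    finally show ?thesis .
  qed
  then show ?thesis using that[of "D powr p"] by simp
qed

lemma bounded_Lp_operator_sq_integral_small:
  assumes "2 \<le> p" "bounded_Lp_operator p T" "0 < \<kappa>"
  shows "\<exists>\<rho>>0. \<forall>f\<in>Lp_space p. Lp_integral p f < \<rho> \<longrightarrow> sq_integral (T f) < \<kappa>"
proof -
  obtain C where "0 \<le> C" and C: "\<And>f. f \<in> Lp_space p \<Longrightarrow> Lp_integral p (T f) \<le> C * Lp_integral p f"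
    using bounded_Lp_operator_Lp_integral_le[of p T] assms(1,2) by auto
  define s where "s = (\<kappa> / 4) powr (p / 2)"
  have "0 < s" using assms(3) by (simp add: s_def)
  have "2 * s powr (2 / p) = \<kappa> / 2"
    using assms(1,3) by (simp add: s_def powr_powr)
  define \<rho> where "\<rho> = s / (C + 1)"
  have "sq_integral (T f) < \<kappa>" if f: "f \<in> Lp_space p" "Lp_integral p f < \<rho>" for f
  proof -
    have "Lp_integral p (T f) \<le> C * Lp_integral p f" by (rule C[OF f(1)])
    also have "\<dots> \<le> C * \<rho>" using f(2) \<open>0 \<le> C\<close> by (intro mult_left_mono) auto
    also have "C * \<rho> \<le> s"
      using \<open>0 \<le> C\<close> \<open>0 < s\<close> by (simp add: \<rho>_def field_simps)
    finally have "sq_integral (T f) \<le> 2 * s powr (2 / p)"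
      using bounded_Lp_operator_Lp_space[OF assms(2) f(1)]
      by (intro sq_integral_le_Lp_integral[OF assms(1) _ \<open>0 < s\<close>])
    then show ?thesis
      using \<open>2 * s powr (2 / p) = \<kappa> / 2\<close> assms(3) by linarith
  qed
  moreover have "0 < \<rho>" using \<open>0 \<le> C\<close> \<open>0 < s\<close> by (simp add: \<rho>_def)
  ultimately show ?thesis by blast
qed

lemma integral_indicator_small:
  fixes \<phi> :: "'a \<Rightarrow> real"
  assumes M: "finite_measure M" and \<phi>: "integrable M \<phi>" "\<And>x. 0 \<le> \<phi> x" and "0 < \<gamma>"
  shows "\<exists>\<eta>>0. \<forall>B\<in>sets M. measure M B \<le> \<eta> \<longrightarrow> (LINT x|M. indicator B x * \<phi> x) < \<gamma>"
proof -
  have [measurable]: "\<phi> \<in> borel_measurable M" using \<phi>(1) by auto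
  have "(\<lambda>n. LINT x|M. min (\<phi> x) (real n)) \<longlonglongrightarrow> (LINT x|M. \<phi> x)"
  proof (rule integral_dominated_convergence[where w = \<phi>])
    show "AE x in M. (\<lambda>n. min (\<phi> x) (real n)) \<longlonglongrightarrow> \<phi> x"
    proof (rule AE_I2)
      fix x
      obtain N where "\<phi> x \<le> real N" using real_arch_simple by blast
      then have "\<forall>\<^sub>F n in sequentially. min (\<phi> x) (real n) = \<phi> x"
        unfolding eventually_sequentially by (intro exI[of _ N]) auto
      then show "(\<lambda>n. min (\<phi> x) (real n)) \<longlonglongrightarrow> \<phi> x" by (rule tendsto_eventually)
    qed
  qed (use \<phi> in auto)
  then obtain N where N: "(LINT x|M. \<phi> x) - (LINT x|M. min (\<phi> x) (real N)) < \<gamma> / 2"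
    using \<open>0 < \<gamma>\<close> unfolding LIMSEQ_iff by (metis half_gt_zero order_refl abs_minus_commute real_norm_def abs_less_iff)
  have int_min: "integrable M (\<lambda>x. min (\<phi> x) (real N))"
    by (rule Bochner_Integration.integrable_bound[OF \<phi>(1)]) (use \<phi>(2) in auto)
  define \<eta> where "\<eta> = \<gamma> / (2 * (real N + 1))"
  have "(LINT x|M. indicator B x * \<phi> x) < \<gamma>" if B: "B \<in> sets M" "measure M B \<le> \<eta>" for B
  proof -
    have int_B: "integrable M (indicator B :: 'a \<Rightarrow> real)"
      using B(1) finite_measure.emeasure_finite[OF M] by (auto simp: less_top)
    have int_B\<phi>: "integrable M (\<lambda>x. indicator B x * \<phi> x)"
      using integrable_mult_indicator[OF B(1) \<phi>(1)] by simp
    have int_bound: "integrable M (\<lambda>x. real N * indicator B x + (\<phi> x - min (\<phi> x) (real N)))"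
      using int_B \<phi>(1) int_min by auto
    \<comment> \<open>below level N the integrand is at most N; above it only the small tail of \<phi> remains\<close>
    have "(LINT x|M. indicator B x * \<phi> x)
        \<le> (LINT x|M. real N * indicator B x + (\<phi> x - min (\<phi> x) (real N)))"
      by (rule integral_mono[OF int_B\<phi> int_bound]) (auto simp: indicator_def)
    also have "\<dots> = real N * measure M B + ((LINT x|M. \<phi> x) - (LINT x|M. min (\<phi> x) (real N)))"
      using int_B \<phi>(1) int_min Int_absorb2[OF sets.sets_into_space[OF B(1)]] by simp
    also have "real N * measure M B \<le> \<gamma> / 2"
    proof -
      have "real N * measure M B \<le> real N * \<eta>" using B(2) by (intro mult_left_mono) auto
      also have "\<dots> \<le> \<gamma> / 2" using \<open>0 < \<gamma>\<close> by (simp add: \<eta>_def field_simps)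
      finally show ?thesis .
    qed
    finally show ?thesis using N by linarith
  qed
  moreover have "0 < \<eta>" using \<open>0 < \<gamma>\<close> by (simp add: \<eta>_def)
  ultimately show ?thesis by blast
qed

lemma integral_square_sum_le:
  fixes w a b :: "'a \<Rightarrow> real"
  assumes "0 < t" "AE x in M. w x = a x + b x"
    and "integrable M (\<lambda>x. (w x)\<^sup>2)" "integrable M (\<lambda>x. (a x)\<^sup>2)" "integrable M (\<lambda>x. (b x)\<^sup>2)"
  shows "(1 - t) * (LINT x|M. (w x)\<^sup>2) \<le> (LINT x|M. (a x)\<^sup>2) + (LINT x|M. (b x)\<^sup>2) / t"
proof -
  have pointwise: "(1 - t) * (u + v)\<^sup>2 \<le> u\<^sup>2 + v\<^sup>2 / t" for u v :: real
  proof -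
    have "t * (u\<^sup>2 + v\<^sup>2 / t - (1 - t) * (u + v)\<^sup>2) = (t * u - (1 - t) * v)\<^sup>2 + t * v\<^sup>2"
      using assms(1) by (simp add: power2_eq_square field_simps)
    also have "0 \<le> \<dots>" using assms(1) by simp
    finally show ?thesis
      using assms(1) by (simp add: zero_le_mult_iff)
  qed
  have "(LINT x|M. (1 - t) * (w x)\<^sup>2) \<le> (LINT x|M. (a x)\<^sup>2 + (b x)\<^sup>2 / t)"
    using assms(2) by (intro integral_mono_AE) (use assms(3-5) pointwise in auto)
  then show ?thesis using assms(4,5) by simp
qed

lemma integral_square_sum_sign:
  fixes a b :: "'a \<Rightarrow> real"
  assumes "a \<in> borel_measurable M" "b \<in> borel_measurable M"
    and "integrable M (\<lambda>x. (a x)\<^sup>2)" "integrable M (\<lambda>x. (b x)\<^sup>2)"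
  obtains r :: real where "\<bar>r\<bar> = 1"
    "(LINT x|M. (a x)\<^sup>2) + (LINT x|M. (b x)\<^sup>2) \<le> (LINT x|M. (a x + r * b x)\<^sup>2)"
proof -
  have abs_mult_le: "\<bar>u * v\<bar> \<le> u\<^sup>2 + v\<^sup>2" for u v :: real
  proof -
    have "2 * (\<bar>u\<bar> * \<bar>v\<bar>) \<le> u\<^sup>2 + v\<^sup>2"
      using sum_squares_bound[of "\<bar>u\<bar>" "\<bar>v\<bar>"] by (simp add: mult.assoc)
    then show ?thesis
      using mult_nonneg_nonneg[OF abs_ge_zero abs_ge_zero, of u v] unfolding abs_mult by linarith
  qed
  have int_ab: "integrable M (\<lambda>x. a x * b x)"
    by (rule Bochner_Integration.integrable_bound[where f = "\<lambda>x. (a x)\<^sup>2 + (b x)\<^sup>2"])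
       (use assms abs_mult_le in auto)
  \<comment> \<open>the sign makes the cross term of the expanded square nonnegative\<close>
  define r :: real where "r = (if 0 \<le> (LINT x|M. a x * b x) then 1 else - 1)"
  have "(LINT x|M. (a x + r * b x)\<^sup>2)
      = (LINT x|M. (a x)\<^sup>2) + 2 * r * (LINT x|M. a x * b x) + (LINT x|M. (b x)\<^sup>2)"
  proof -
    have "(a x + r * b x)\<^sup>2 = (a x)\<^sup>2 + 2 * r * (a x * b x) + (b x)\<^sup>2" for x
      by (simp add: r_def power2_eq_square algebra_simps)
    then show ?thesis using int_ab assms(3,4) by simp
  qed
  moreover have "0 \<le> r * (LINT x|M. a x * b x)" by (simp add: r_def)
  ultimately show ?thesis using that[of r] by (simp add: r_def)
qed

lemma Lp_integral_truncated_le: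
  assumes "2 \<le> p" "0 \<le> M" "f \<in> Lp_space p"
  shows "Lp_integral p (\<lambda>x. if \<bar>f x\<bar> \<le> M then f x else 0) \<le> M powr (p - 2) * sq_integral f"
proof -
  have "\<bar>if \<bar>f x\<bar> \<le> M then f x else 0\<bar> powr p \<le> M powr (p - 2) * (f x)\<^sup>2" for x
  proof (cases "\<bar>f x\<bar> \<le> M \<and> f x \<noteq> 0")
    case True
    then have "\<bar>f x\<bar> powr p = \<bar>f x\<bar> powr (p - 2) * (f x)\<^sup>2"
      using powr_add[of "\<bar>f x\<bar>" "p - 2" 2] by simp
    also have "\<dots> \<le> M powr (p - 2) * (f x)\<^sup>2"
      using True assms(1) by (intro mult_right_mono powr_mono2) auto
    finally show ?thesis using True by simp
  qed auto
  moreover have "(\<lambda>x. if \<bar>f x\<bar> \<le> M then f x else 0) \<in> Lp_space p"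
    using assms Lp_spaceD(1)[OF assms(3)] by (intro Lp_space_If) auto
  ultimately have "Lp_integral p (\<lambda>x. if \<bar>f x\<bar> \<le> M then f x else 0)
      \<le> (LINT x|unitI. M powr (p - 2) * (f x)\<^sup>2)"
    using integrable_square_Lp[OF assms(1,3)] by (intro integral_mono) (auto dest!: Lp_spaceD(2))
  then show ?thesis by simp
qed

lemma measure_Lp_large_values_le:
  assumes "0 < p" "0 < M" "f \<in> Lp_space p"
  shows "measure unitI {x\<in>{0..1}. M < \<bar>f x\<bar>} \<le> Lp_integral p f / M powr p"
proof -
  have [measurable]: "f \<in> borel_measurable unitI" by (rule Lp_spaceD(1)[OF assms(3)])
  have "{x\<in>{0..1}. M < \<bar>f x\<bar>} \<subseteq> {x\<in>space unitI. M powr p \<le> \<bar>f x\<bar> powr p}"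
    using assms(1,2) by (auto intro!: powr_mono2)
  then have "measure unitI {x\<in>{0..1}. M < \<bar>f x\<bar>}
      \<le> measure unitI {x\<in>space unitI. M powr p \<le> \<bar>f x\<bar> powr p}"
    by (intro finite_measure.finite_measure_mono[OF finite_measure_unitI]) measurable
  also have "\<dots> \<le> Lp_integral p f / M powr p"
    using assms(2) by (intro integral_Markov_inequality_measure[OF Lp_spaceD(2)[OF assms(3)], of "{}"]) auto
  finally show ?thesis .
qed

lemma bounded_Lp_operator_restrict_small_set:
  assumes "2 \<le> p" "bounded_Lp_operator p T" "G \<in> Lp_space p" "0 < \<gamma>"
  obtains \<eta> where "0 < \<eta>" "\<And>B. B \<in> sets unitI \<Longrightarrow> measure unitI B \<le> \<eta> \<Longrightarrow>
      sq_integral (T G) - \<gamma> < sq_integral (T (\<lambda>x. if x \<notin> B then G x else 0))"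
proof -
  define A where "A = sq_integral (T G)"
  define t where "t = \<gamma> / (2 * (A + 1))"
  have "0 \<le> A" by (simp add: A_def)
  then have "0 < t" "t * A \<le> \<gamma> / 2"
    using assms(4) by (simp_all add: t_def field_simps)
  obtain \<rho> where "0 < \<rho>" and
    \<rho>: "\<And>f. f \<in> Lp_space p \<Longrightarrow> Lp_integral p f < \<rho> \<Longrightarrow> sq_integral (T f) < t * \<gamma> / 2"
    using bounded_Lp_operator_sq_integral_small[OF assms(1,2), of "t * \<gamma> / 2"] \<open>0 < t\<close> assms(4)
    by auto
  obtain \<eta> where "0 < \<eta>" and
    \<eta>: "\<And>B. B \<in> sets unitI \<Longrightarrow> measure unitI B \<le> \<eta> \<Longrightarrow> (LINT x|unitI. indicator B x * \<bar>G x\<bar> powr p) < \<rho>"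
    using integral_indicator_small[OF finite_measure_unitI Lp_spaceD(2)[OF assms(3)] _ \<open>0 < \<rho>\<close>] by auto
  have "A - \<gamma> < sq_integral (T (\<lambda>x. if x \<notin> B then G x else 0))"
    if B: "B \<in> sets unitI" "measure unitI B \<le> \<eta>" for B
  proof -
    define G1 where "G1 = (\<lambda>x. if x \<notin> B then G x else 0)"
    define G2 where "G2 = (\<lambda>x. if x \<in> B then G x else 0)"
    have G1: "G1 \<in> Lp_space p" and G2: "G2 \<in> Lp_space p"
      unfolding G1_def G2_def using assms(1) B(1) by (auto intro!: Lp_space_If[OF _ assms(3)])
    have "Lp_integral p G2 = (LINT x|unitI. indicator B x * \<bar>G x\<bar> powr p)"
      by (intro Bochner_Integration.integral_cong) (auto simp: G2_def indicator_def)
    then have "sq_integral (T G2) < t * \<gamma> / 2"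
      using \<rho>[OF G2] \<eta>[OF B] by simp
    then have small: "sq_integral (T G2) / t < \<gamma> / 2"
      using \<open>0 < t\<close> by (simp add: field_simps)
    have "(\<lambda>y. 1 * G1 y + 1 * G2 y) = G" by (auto simp: G1_def G2_def)
    then have "AE x in unitI. T G x = T G1 x + T G2 x"
      using bounded_Lp_operator_linear[OF assms(2) G1 G2, of 1 1] by simp
    then have "(1 - t) * A \<le> sq_integral (T G1) + sq_integral (T G2) / t"
      unfolding A_def using \<open>0 < t\<close> assms(1) bounded_Lp_operator_Lp_space[OF assms(2)] assms(3) G1 G2
      by (intro integral_square_sum_le integrable_square_Lp) auto
    moreover have "(1 - t) * A = A - t * A" by (simp add: algebra_simps)
    ultimately show ?thesis
      using small \<open>t * A \<le> \<gamma> / 2\<close> unfolding G1_def by linarith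
  qed
  then show ?thesis using that \<open>0 < \<eta>\<close> by (simp add: A_def)
qed

text \<open>The negation of the theorem, with \<open>e = \<epsilon>\<^sup>2\<close> and the norms replaced by the integrals defining them.\<close>

locale L2_discontinuous_Lp_operator =
  fixes p e :: real and T :: "(real \<Rightarrow> real) \<Rightarrow> real \<Rightarrow> real"
  assumes p_gt_2: "2 < p" and bounded: "bounded_Lp_operator p T" and e_pos: "0 < e"
    and discontinuous: "\<And>\<delta>. 0 < \<delta> \<Longrightarrow>
      \<exists>f\<in>Lp_space p. Lp_integral p f \<le> 1 \<and> sq_integral f < \<delta> \<and> e \<le> sq_integral (T f)"
begin

lemma p_ge_2: "2 \<le> p"
  using p_gt_2 by simp

lemma bad_function_small_support:
  assumes "0 < \<eta>"
  obtains h where "h \<in> Lp_space p" "Lp_integral p h \<le> 1" "e / 8 < sq_integral (T h)"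
    "measure unitI {x\<in>{0..1}. h x \<noteq> 0} \<le> \<eta>"
proof -
  define M where "M = max 1 (1 / \<eta>)"
  have "0 < M" by (simp add: M_def)
  have "1 / M powr p \<le> \<eta>"
  proof -
    have "1 / \<eta> \<le> M powr 1" by (simp add: M_def)
    also have "\<dots> \<le> M powr p" using p_gt_2 by (intro powr_mono) (auto simp: M_def)
    finally show ?thesis using assms \<open>0 < M\<close> by (simp add: field_simps)
  qed
  obtain \<rho> where "0 < \<rho>" and
    \<rho>: "\<And>f. f \<in> Lp_space p \<Longrightarrow> Lp_integral p f < \<rho> \<Longrightarrow> sq_integral (T f) < e / 4"
    using bounded_Lp_operator_sq_integral_small[OF p_ge_2 bounded, of "e / 4"] e_pos by auto
  define K where "K = M powr (p - 2)"
  have "0 \<le> K" by (simp add: K_def)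
  have "0 < \<rho> / (K + 1)"
    using \<open>0 < \<rho>\<close> \<open>0 \<le> K\<close> by simp
  then obtain f where f: "f \<in> Lp_space p" "Lp_integral p f \<le> 1" "sq_integral f < \<rho> / (K + 1)"
    "e \<le> sq_integral (T f)"
    using discontinuous by blast
  have [measurable]: "f \<in> borel_measurable unitI" by (rule Lp_spaceD(1)[OF f(1)])
  \<comment> \<open>the bounded part of f is small in L^p since f is small in L^2; the rest lives on a small set\<close>
  define g where "g = (\<lambda>x. if \<bar>f x\<bar> \<le> M then f x else 0)"
  define h where "h = (\<lambda>x. if M < \<bar>f x\<bar> then f x else 0)"
  have g: "g \<in> Lp_space p" and h: "h \<in> Lp_space p"
    unfolding g_def h_def using p_gt_2 by (auto intro!: Lp_space_If[OF _ f(1)])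
  have "Lp_integral p g \<le> K * sq_integral f"
    unfolding g_def K_def using Lp_integral_truncated_le[OF p_ge_2 _ f(1)] \<open>0 < M\<close> by simp
  also have "\<dots> \<le> K * (\<rho> / (K + 1))"
    using f(3) \<open>0 \<le> K\<close> by (intro mult_left_mono) auto
  also have "\<dots> < \<rho>"
    using \<open>0 < \<rho>\<close> \<open>0 \<le> K\<close> by (simp add: field_simps)
  finally have Tg: "sq_integral (T g) < e / 4" by (rule \<rho>[OF g])
  have "(\<lambda>y. 1 * g y + 1 * h y) = f" by (auto simp: g_def h_def)
  then have "AE x in unitI. T f x = T g x + T h x"
    using bounded_Lp_operator_linear[OF bounded g h, of 1 1] by simp
  then have "(1 - 1 / 2) * sq_integral (T f) \<le> sq_integral (T g) + sq_integral (T h) / (1 / 2)"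
    using p_ge_2 bounded_Lp_operator_Lp_space[OF bounded] f(1) g h
    by (intro integral_square_sum_le integrable_square_Lp) auto
  then have "e / 8 < sq_integral (T h)"
    using Tg f(4) by simp
  moreover have "Lp_integral p h \<le> 1"
  proof -
    have "Lp_integral p h \<le> Lp_integral p f"
      using Lp_spaceD(2)[OF h] Lp_spaceD(2)[OF f(1)] by (intro integral_mono) (auto simp: h_def)
    then show ?thesis using f(2) by simp
  qed
  moreover have "measure unitI {x\<in>{0..1}. h x \<noteq> 0} \<le> \<eta>"
  proof -
    have "{x\<in>{0..1}. h x \<noteq> 0} = {x\<in>{0..1}. M < \<bar>f x\<bar>}"
      using \<open>0 < M\<close> by (auto simp: h_def)
    also have "measure unitI \<dots> \<le> Lp_integral p f / M powr p"
      using p_gt_2 \<open>0 < M\<close> f(1) by (intro measure_Lp_large_values_le) auto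
    also have "\<dots> \<le> 1 / M powr p"
      using f(2) by (intro divide_right_mono) auto
    finally show ?thesis using \<open>1 / M powr p \<le> \<eta>\<close> by simp
  qed
  ultimately show ?thesis using that h by blast
qed

lemma bad_function_step:
  assumes G: "G \<in> Lp_space p" and "m * (e / 16) \<le> sq_integral (T G)"
  obtains G' where "G' \<in> Lp_space p" "Lp_integral p G' \<le> Lp_integral p G + 1"
    "(m + 1) * (e / 16) \<le> sq_integral (T G')"
proof -
  obtain \<eta> where "0 < \<eta>" and \<eta>: "\<And>B. B \<in> sets unitI \<Longrightarrow> measure unitI B \<le> \<eta> \<Longrightarrow>
      sq_integral (T G) - e / 16 < sq_integral (T (\<lambda>x. if x \<notin> B then G x else 0))"
    using bounded_Lp_operator_restrict_small_set[OF p_ge_2 bounded G, of "e / 16"] e_pos by auto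
  obtain h where h: "h \<in> Lp_space p" "Lp_integral p h \<le> 1" "e / 8 < sq_integral (T h)"
    and supp_h: "measure unitI {x\<in>{0..1}. h x \<noteq> 0} \<le> \<eta>"
    using bad_function_small_support[OF \<open>0 < \<eta>\<close>] by blast
  have [measurable]: "h \<in> borel_measurable unitI" by (rule Lp_spaceD(1)[OF h(1)])
  define B where "B = {x\<in>{0..1}. h x \<noteq> 0}"
  have B: "B \<in> sets unitI"
  proof -
    have "{x\<in>space unitI. h x \<noteq> 0} \<in> sets unitI" by measurable
    then show ?thesis by (simp add: B_def)
  qed
  \<comment> \<open>G is removed on the support of h, and h is added with the sign that makes the cross term nonnegative\<close>
  define G1 where "G1 = (\<lambda>x. if x \<notin> B then G x else 0)"
  have G1: "G1 \<in> Lp_space p"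
    unfolding G1_def using p_gt_2 B by (auto intro!: Lp_space_If[OF _ G])
  have TG1: "m * (e / 16) - e / 16 < sq_integral (T G1)"
    using \<eta>[OF B] supp_h assms(2) by (simp add: B_def G1_def)
  have TG1_Lp: "T G1 \<in> Lp_space p" and Th_Lp: "T h \<in> Lp_space p"
    using bounded_Lp_operator_Lp_space[OF bounded] G1 h(1) by auto
  obtain r where "\<bar>r\<bar> = 1" and
    r: "sq_integral (T G1) + sq_integral (T h) \<le> (LINT x|unitI. (T G1 x + r * T h x)\<^sup>2)"
    using integral_square_sum_sign[OF Lp_spaceD(1)[OF TG1_Lp] Lp_spaceD(1)[OF Th_Lp]
        integrable_square_Lp[OF p_ge_2 TG1_Lp] integrable_square_Lp[OF p_ge_2 Th_Lp]] by blast
  define G' where "G' = (\<lambda>x. G1 x + r * h x)"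
  have G': "G' \<in> Lp_space p"
    unfolding G'_def using Lp_space_lincomb[OF _ G1 h(1), of 1 r] p_gt_2 by simp
  have "Lp_integral p G' \<le> (LINT x|unitI. \<bar>G x\<bar> powr p + \<bar>h x\<bar> powr p)"
  proof (rule integral_mono)
    fix x assume "x \<in> space unitI"
    then show "\<bar>G' x\<bar> powr p \<le> \<bar>G x\<bar> powr p + \<bar>h x\<bar> powr p"
      using \<open>\<bar>r\<bar> = 1\<close> by (cases "x \<in> B") (auto simp: G'_def G1_def B_def abs_mult)
  qed (use Lp_spaceD(2) G' G h(1) in auto)
  then have "Lp_integral p G' \<le> Lp_integral p G + 1"
    using h(2) Lp_spaceD(2)[OF G] Lp_spaceD(2)[OF h(1)] by simp
  moreover have "sq_integral (T G') = (LINT x|unitI. (T G1 x + r * T h x)\<^sup>2)"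
  proof (rule integral_cong_AE)
    show "AE x in unitI. (T G' x)\<^sup>2 = (T G1 x + r * T h x)\<^sup>2"
      using bounded_Lp_operator_linear[OF bounded G1 h(1), of 1 r] by (auto simp: G'_def)
  qed (use Lp_spaceD(1) bounded_Lp_operator_Lp_space[OF bounded G'] TG1_Lp Th_Lp in auto)
  ultimately show ?thesis
    using that G' TG1 h(3) r by (simp add: algebra_simps)
qed

lemma bad_functions_grow:
  "\<exists>G\<in>Lp_space p. Lp_integral p G \<le> real n \<and> real n * (e / 16) \<le> sq_integral (T G)"
proof (induction n)
  case 0
  show ?case using zero_in_Lp_space by force
next
  case (Suc n)
  then obtain G where "G \<in> Lp_space p" "Lp_integral p G \<le> real n" "real n * (e / 16) \<le> sq_integral (T G)"
    by blast
  then obtain G' where "G' \<in> Lp_space p" "Lp_integral p G' \<le> real (Suc n)"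
    "real (Suc n) * (e / 16) \<le> sq_integral (T G')"
    using bad_function_step[of G "real n"] by (force simp: add.commute)
  then show ?case by blast
qed

lemma inconsistent: False
proof -
  obtain C where "0 \<le> C" and C: "\<And>f. f \<in> Lp_space p \<Longrightarrow> Lp_integral p (T f) \<le> C * Lp_integral p f"
    using bounded_Lp_operator_Lp_integral_le[of p T] p_gt_2 bounded by auto
  define q where "q = 1 - 2 / p"
  have "0 < q" using p_gt_2 by (simp add: q_def field_simps)
  define K where "K = 32 * (C + 1) powr (2 / p) / e"
  have "0 < K" using \<open>0 \<le> C\<close> e_pos by (simp add: K_def)
  obtain n :: nat where n: "K powr (1 / q) < real n" using reals_Archimedean2 by blast
  moreover have "0 < K powr (1 / q)" using \<open>0 < K\<close> by simp
  ultimately have "0 < real n" by linarith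
  have "K < real n powr q"
  proof -
    have "K = (K powr (1 / q)) powr q" using \<open>0 < K\<close> \<open>0 < q\<close> by (simp add: powr_powr)
    also have "\<dots> < real n powr q" using n \<open>0 < q\<close> by (intro powr_less_mono2) auto
    finally show ?thesis .
  qed
  obtain G where G: "G \<in> Lp_space p" "Lp_integral p G \<le> real n" and
    TG: "real n * (e / 16) \<le> sq_integral (T G)"
    using bad_functions_grow by blast
  \<comment> \<open>L^p-boundedness caps the energy of T G at order n^(2/p), while it grows like n\<close>
  have "Lp_integral p (T G) \<le> C * Lp_integral p G" by (rule C[OF G(1)])
  also have "\<dots> \<le> C * real n" using G(2) \<open>0 \<le> C\<close> by (rule mult_left_mono)
  also have "\<dots> \<le> (C + 1) * real n" by (simp add: distrib_right)
  finally have "Lp_integral p (T G) \<le> (C + 1) * real n" .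
  then have "sq_integral (T G) \<le> 2 * ((C + 1) * real n) powr (2 / p)"
    using \<open>0 \<le> C\<close> \<open>0 < real n\<close> bounded_Lp_operator_Lp_space[OF bounded G(1)]
    by (intro sq_integral_le_Lp_integral[OF p_ge_2]) auto
  also have "\<dots> = e / 16 * K * real n powr (2 / p)"
    using \<open>0 \<le> C\<close> e_pos by (simp add: K_def powr_mult)
  also have "\<dots> < e / 16 * real n powr q * real n powr (2 / p)"
    using \<open>K < real n powr q\<close> e_pos \<open>0 < real n\<close> by simp
  also have "\<dots> = real n * (e / 16)"
    using \<open>0 < real n\<close> by (simp add: q_def powr_add[symmetric])
  finally show False using TG by simp
qed

end

theorem lemma5p4:
  fixes p :: real and T :: "(real \<Rightarrow> real) \<Rightarrow> (real \<Rightarrow> real)"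
  assumes "2 < p" and "bounded_Lp_operator p T"
  shows "\<forall>\<epsilon>>0. \<exists>\<delta>>0. \<forall>f\<in>Lp_space p.
           Lp_norm p f \<le> 1 \<and> Lp_norm 2 f < \<delta> \<longrightarrow> Lp_norm 2 (T f) < \<epsilon>"
proof (rule ccontr)
  assume "\<not> ?thesis"
  then obtain \<epsilon> :: real where "0 < \<epsilon>" and bad: "\<And>\<delta>. 0 < \<delta> \<Longrightarrow> \<exists>f\<in>Lp_space p.
      Lp_norm p f \<le> 1 \<and> Lp_norm 2 f < \<delta> \<and> \<not> Lp_norm 2 (T f) < \<epsilon>"
    by blast
  have "L2_discontinuous_Lp_operator p (\<epsilon>\<^sup>2) T"
  proof
    fix \<delta> :: real assume "0 < \<delta>"
    then obtain f where "f \<in> Lp_space p" "Lp_norm p f \<le> 1" "Lp_norm 2 f < sqrt \<delta>"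
      "\<epsilon> \<le> Lp_norm 2 (T f)"
      using bad[of "sqrt \<delta>"] by auto
    moreover from this have "\<epsilon>\<^sup>2 \<le> sq_integral (T f)"
      using \<open>0 < \<epsilon>\<close> power_mono[of \<epsilon> "sqrt (sq_integral (T f))" 2] by (simp add: Lp_norm_2)
    ultimately show "\<exists>f\<in>Lp_space p. Lp_integral p f \<le> 1 \<and> sq_integral f < \<delta> \<and> \<epsilon>\<^sup>2 \<le> sq_integral (T f)"
      using Lp_integral_le_1_of_Lp_norm[of p f] assms(1)
      by (auto simp: Lp_norm_2 real_sqrt_less_iff)
  qed (use assms \<open>0 < \<epsilon>\<close> in auto)
  then show False by (rule L2_discontinuous_Lp_operator.inconsistent)
qed

end
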